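(* Let $M,N_1,\dots,N_n$ be $\lambda$-terms and $I$ an interpretation. If the judgment $x_1:\vec a_1,\dots,x_n:\vec a_n\vdash M:a$ is derivable in $E^S_A$ and $N_i\in\llbracket\vec a_i\rrbracket_I$ for all $i$, then $M[N_1/x_1,\dots,N_n/x_n]\in\llbracket a\rrbracket_I$ (parallel capture-avoiding substitution).
   Context: $[n]=\{1,\dots,n\}$. Fix a class $\mathcal C$ of functions between finite ordinals equal to one of: all bijections, all injections, all surjections, all functions. For a small category $X$, $SX$ has finite lists of objects of $X$ as objects and morphisms $\langle x_1,\dots,x_n\rangle\to\langle y_1,\dots,y_m\rangle$ the tuples $\langle\alpha,f_1,\dots,f_m\rangle$ with $\alpha:[m]\to[n]$ in $\mathcal C$, $f_i:x_{\alpha(i)}\to y_i$; composite of $\langle\alpha,\vec f\rangle$ then $\langle\beta,\vec g\rangle$ is $\langle\alpha\circ\beta,(g_i\circ f_{\beta(i)})_i\rangle$; tensor $\oplus$ = concatenation, unit $\langle\rangle$. Fix a small category $A$. $D=D_A$ is the colimit of $D_0=A$, $D_{k+1}=(SD_k)^{o}\times D_k\sqcup A$: objects $a::=o\mid\langle a_1,\dots,a_k\rangle\Rightarrow a$ ($o\in\mathrm{Ob}(A)$); morphisms are those of $A$ and $\langle\alpha,\vec f\rangle\Rightarrow f:(\vec a\Rightarrow a)\to(\vec a'\Rightarrow a')$ for $\langle\alpha,\vec f\rangle:\vec a'\to\vec a$ in $SD$, $f:a\to a'$. $SD=S(D_A)$. Contexts are $\Delta=\langle\vec a_1,\dots,\vec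 a_n\rangle\in(SD)^n$, written $x_1:\vec a_1,\dots,x_n:\vec a_n$; $\otimes$ is componentwise concatenation. Type system $E^S_A$: (Var) given morphisms $f_j:\vec a_j\to\langle\rangle$ ($j\ne i$) and $f_i:\vec a_i\to\langle a\rangle$ in $SD$, infer $x_1:\vec a_1,\dots,x_n:\vec a_n\vdash x_i:a$; (Abs) from $\Delta,x:\vec a\vdash M:a$ infer $\Delta\vdash\lambda x.M:\vec a\Rightarrow a$; (App) from $\Gamma_0\vdash M:\langle a_1,\dots,a_k\rangle\Rightarrow a$, $\Gamma_i\vdash N:a_i$ ($1\le i\le k$) and a morphism $\eta:\Delta\to\bigotimes_{i=0}^k\Gamma_i$ in $(SD)^n$, infer $\Delta\vdash MN:a$. $\Lambda$ is the set of $\lambda$-terms; $\mathcal X\subseteq\Lambda$ is saturated if $M[N/x]N_1\cdots N_n\in\mathcal X$ implies $(\lambda x.M)NN_1\cdots N_n\in\mathcal X$; $\mathcal X_1\Rightarrow\mathcal X_2=\{M\mid\forall N\in\mathcal X_1,MN\in\mathcal X_2\}$. An interpretation is a functor $I$ from $A$ to the poset of saturated subsets of $\Lambda$ under inclusion. Realizers: $\llbracket o\rrbracket_I=I(o)$, $\llbracket\langle\rangle\rrbracket_I=\Lambda$, $\llbracket\langle a_1,\dots,a_k\rangle\rrbracket_I=\bigcap_{i}\llbracket a_i\rrbracket_I$ ($k\ge1$), $\llbracket\vec a\Rightarrow a\rrbracket_I=\llbracket\vec a\rrbracket_I\Rightarrow\llbracket a\rrbracket_I$. *)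

theory Defs
  imports Main
begin

datatype trm = Var nat | App trm trm | Lam trm

fun lift :: "nat \<Rightarrow> trm \<Rightarrow> trm" where
  "lift k (Var i) = (if i < k then Var i else Var (Suc i))"
| "lift k (App M N) = App (lift k M) (lift k N)"
| "lift k (Lam M) = Lam (lift (Suc k) M)"

fun psubst :: "(nat \<Rightarrow> trm) \<Rightarrow> trm \<Rightarrow> trm" where
  "psubst s (Var i) = s i"
| "psubst s (App M N) = App (psubst s M) (psubst s N)"
| "psubst s (Lam M) = Lam (psubst (\<lambda>i. case i of 0 \<Rightarrow> Var 0 | Suc j \<Rightarrow> lift 0 (s j)) M)"

text \<open>Beta-substitution M[N/x] where x is the bound variable (index 0).\<close>
definition subst0 :: "trm \<Rightarrow> trm \<Rightarrow> trm" where
  "subst0 M N = psubst (\<lambda>i. case i of 0 \<Rightarrow> N | Suc j \<Rightarrow> Var j) M"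

definition apps :: "trm \<Rightarrow> trm list \<Rightarrow> trm" where
  "apps M Ns = foldl App M Ns"

definition saturated :: "trm set \<Rightarrow> bool" where
  "saturated X \<longleftrightarrow> (\<forall>M N Ns. apps (subst0 M N) Ns \<in> X \<longrightarrow> apps (App (Lam M) N) Ns \<in> X)"

definition arrow_set :: "trm set \<Rightarrow> trm set \<Rightarrow> trm set" where
  "arrow_set X Y = {M. \<forall>N\<in>X. App M N \<in> Y}"

definition small_category ::
  "('m \<Rightarrow> 'o) \<Rightarrow> ('m \<Rightarrow> 'o) \<Rightarrow> ('o \<Rightarrow> 'm) \<Rightarrow> ('m \<Rightarrow> 'm \<Rightarrow> 'm) \<Rightarrow> bool" where
  "small_category domA codA idm compA \<longleftrightarrow>
     (\<forall>x. domA (idm x) = x \<and> codA (idm x) = x)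
   \<and> (\<forall>f g. codA f = domA g \<longrightarrow> domA (compA g f) = domA f \<and> codA (compA g f) = codA g)
   \<and> (\<forall>f. compA f (idm (domA f)) = f \<and> compA (idm (codA f)) f = f)
   \<and> (\<forall>f g h. codA f = domA g \<and> codA g = domA h \<longrightarrow> compA h (compA g f) = compA (compA h g) f)"

datatype fclass = Bijections | Injections | Surjections | AllFunctions

text \<open>A function alpha : [m] \<rightarrow> [n] is represented (0-based) bs a list of length m with entries < n.\<close>
definition in_class :: "fclass \<Rightarrow> nat list \<Rightarrow> nat \<Rightarrow> nat \<Rightarrow> bool" where
  "in_class C \<alpha> m n \<longleftrightarrow> length \<alpha> = m \<and> set \<alpha> \<subseteq> {..<n} \<and>
     (case C of
        Bijections \<Rightarrow> distinct \<alpha> \<and> set \<alpha> = {..<n}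
      | Injections \<Rightarrow> distinct \<alpha>
      | Surjections \<Rightarrow> set \<alpha> = {..<n}
      | AllFunctions \<Rightarrow> True)"

datatype 'o dty = Base 'o | Arrow "'o dty list" "'o dty"

datatype 'm dmorph = MA 'm | MArr "nat list" "'m dmorph list" "'m dmorph"

text \<open>A morphism (xs \<Rightarrow> x) \<rightarrow> (ys \<Rightarrow> y) is <alpha,fs> \<Rightarrow> f with <alpha,fs> : ys \<rightarrow> xs in SD and f : x \<rightarrow> y.\<close>
inductive dmor :: "fclass \<Rightarrow> ('m \<Rightarrow> 'o) \<Rightarrow> ('m \<Rightarrow> 'o) \<Rightarrow> 'm dmorph \<Rightarrow> 'o dty \<Rightarrow> 'o dty \<Rightarrow> bool"
  for C domA codA where
  base: "dmor C domA codA (MA f) (Base (domA f)) (Base (codA f))"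
| arr: "\<lbrakk> in_class C \<alpha> (length xs) (length ys);
          length fs = length xs;
          \<forall>i<length xs. dmor C domA codA (fs ! i) (ys ! (\<alpha> ! i)) (xs ! i);
          dmor C domA codA f x y \<rbrakk>
        \<Longrightarrow> dmor C domA codA (MArr \<alpha> fs f) (Arrow xs x) (Arrow ys y)"

text \<open>Morphisms <alpha, f_1..f_m> : <x_1..x_n> \<rightarrow> <y_1..y_m> in SD.\<close>
definition smor :: "fclass \<Rightarrow> ('m \<Rightarrow> 'o) \<Rightarrow> ('m \<Rightarrow> 'o) \<Rightarrow> nat list \<times> 'm dmorph list
    \<Rightarrow> 'o dty list \<Rightarrow> 'o dty list \<Rightarrow> bool" where
  "smor C domA codA \<phi> xs ys \<longleftrightarrow>
     in_class C (fst \<phi>) (length ys) (length xs) \<and> length (snd \<phi>) = length ys \<and>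
     (\<forall>i<length ys. dmor C domA codA (snd \<phi> ! i) (xs ! (fst \<phi> ! i)) (ys ! i))"

type_synonym 'o ctx = "'o dty list list"

definition ctx_tensor :: "nat \<Rightarrow> 'o ctx list \<Rightarrow> 'o ctx" where
  "ctx_tensor n Gs = map (\<lambda>j. concat (map (\<lambda>G. G ! j) Gs)) [0..<n]"

definition ctx_mor :: "fclass \<Rightarrow> ('m \<Rightarrow> 'o) \<Rightarrow> ('m \<Rightarrow> 'o) \<Rightarrow> (nat list \<times> 'm dmorph list) list
    \<Rightarrow> 'o ctx \<Rightarrow> 'o ctx \<Rightarrow> bool" where
  "ctx_mor C domA codA \<eta> D G \<longleftrightarrow> length \<eta> = length D \<and> length G = length D \<and>
     (\<forall>j<length D. smor C domA codA (\<eta> ! j) (D ! j) (G ! j))"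

section \<open>The type system E^S_A (variable i of the context = de Bruijn index i)\<close>

inductive typed :: "fclass \<Rightarrow> ('m \<Rightarrow> 'o) \<Rightarrow> ('m \<Rightarrow> 'o) \<Rightarrow> 'o ctx \<Rightarrow> trm \<Rightarrow> 'o dty \<Rightarrow> bool"
  for C domA codA where
  var: "\<lbrakk> i < length D;
          \<forall>j<length D. j \<noteq> i \<longrightarrow> (\<exists>\<phi>. smor C domA codA \<phi> (D ! j) []);
          \<exists>\<phi>. smor C domA codA \<phi> (D ! i) [a] \<rbrakk>
        \<Longrightarrow> typed C domA codA D (Var i) a"
| abs: "typed C domA codA (bs # D) M a \<Longrightarrow> typed C domA codA D (Lam M) (Arrow bs a)"
| app: "\<lbrakk> typed C domA codA G0 M (Arrow bs a);
          length Gs = length bs;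
          \<forall>i<length bs. typed C domA codA (Gs ! i) N (bs ! i);
          length G0 = length D;
          \<forall>i<length Gs. length (Gs ! i) = length D;
          \<exists>\<eta>. ctx_mor C domA codA \<eta> D (ctx_tensor (length D) (G0 # Gs)) \<rbrakk>
        \<Longrightarrow> typed C domA codA D (App M N) a"

definition is_interpretation :: "('m \<Rightarrow> 'o) \<Rightarrow> ('m \<Rightarrow> 'o) \<Rightarrow> ('o \<Rightarrow> trm set) \<Rightarrow> bool" where
  "is_interpretation domA codA I \<longleftrightarrow> (\<forall>x. saturated (I x)) \<and> (\<forall>f. I (domA f) \<subseteq> I (codA f))"

fun realizer :: "('o \<Rightarrow> trm set) \<Rightarrow> 'o dty \<Rightarrow> trm set" where
  "realizer I (Base x) = I x"
| "realizer I (Arrow bs a) = arrow_set (\<Inter>b\<in>set bs. realizer I b) (realizer I a)"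

definition realizer_list :: "('o \<Rightarrow> trm set) \<Rightarrow> 'o dty list \<Rightarrow> trm set" where
  "realizer_list I bs = (if bs = [] then UNIV else (\<Inter>b\<in>set bs. realizer I b))"

end

theory Submission
  imports Defs
begin

text \<open>Soundness of realizability, by induction on the typing derivation with the
  substitution generalised. Realizers of all types are saturated, i.e. closed under
  head beta-expansion, which handles abstraction. Every morphism of \<open>D\<close> (and of \<open>SD\<close>)
  induces an inclusion of realizers, contravariantly in argument lists; this absorbs
  the weakening and contraction performed by the variable rule and by the context
  morphism of the application rule.\<close>

definition scons :: "trm \<Rightarrow> (nat \<Rightarrow> trm) \<Rightarrow> nat \<Rightarrow> trm" where
  "scons N s = (\<lambda>i. case i of 0 \<Rightarrow> N | Suc j \<Rightarrow> s j)"

definition shift_subst :: "(nat \<Rightarrow> trm) \<Rightarrow> nat \<Rightarrow> trm" where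
  "shift_subst s = scons (Var 0) (\<lambda>j. lift 0 (s j))"

definition shift_ren :: "(nat \<Rightarrow> nat) \<Rightarrow> nat \<Rightarrow> nat" where
  "shift_ren r = (\<lambda>i. case i of 0 \<Rightarrow> 0 | Suc j \<Rightarrow> Suc (r j))"

lemma scons_0 [simp]: "scons N s 0 = N"
  and scons_Suc [simp]: "scons N s (Suc j) = s j"
  by (simp_all add: scons_def)

lemma psubst_Lam: "psubst s (Lam M) = Lam (psubst (shift_subst s) M)"
  by (simp add: shift_subst_def scons_def)

declare psubst.simps(3) [simp del] psubst_Lam [simp]

lemma subst0_eq_psubst: "subst0 M N = psubst (scons N Var) M"
  by (simp add: subst0_def scons_def)

lemma shift_subst_Var: "shift_subst (\<lambda>i. Var (r i)) = (\<lambda>i. Var (shift_ren r i))"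
  by (rule ext) (simp add: shift_subst_def shift_ren_def scons_def split: nat.split)

lemma lift_eq_rename: "lift k t = psubst (\<lambda>i. Var (if i < k then i else Suc i)) t"
proof (induction t arbitrary: k)
  case (Lam t)
  have "shift_subst (\<lambda>i. Var (if i < k then i else Suc i)) = (\<lambda>i. Var (if i < Suc k then i else Suc i))"
    by (rule ext) (simp add: shift_subst_def scons_def split: nat.split)
  with Lam show ?case by simp
qed simp_all

lemma lift0_eq_rename: "lift 0 t = psubst (\<lambda>i. Var (Suc i)) t"
  using lift_eq_rename[of 0 t] by simp

lemma psubst_rename: "psubst s (psubst (\<lambda>i. Var (r i)) t) = psubst (\<lambda>i. s (r i)) t"
proof (induction t arbitrary: s r)
  case (Lam t)
  have "(\<lambda>i. shift_subst s (shift_ren r i)) = shift_subst (\<lambda>i. s (r i))"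
    by (rule ext) (simp add: shift_subst_def shift_ren_def split: nat.split)
  with Lam show ?case by (simp add: shift_subst_Var)
qed simp_all

lemma rename_psubst:
  "psubst (\<lambda>i. Var (r i)) (psubst s t) = psubst (\<lambda>i. psubst (\<lambda>i. Var (r i)) (s i)) t"
proof (induction t arbitrary: s r)
  case (Lam t)
  have "(\<lambda>i. psubst (\<lambda>i. Var (shift_ren r i)) (shift_subst s i))
      = shift_subst (\<lambda>i. psubst (\<lambda>i. Var (r i)) (s i))"
    by (rule ext) (simp add: shift_subst_def shift_ren_def scons_def lift0_eq_rename psubst_rename
        split: nat.split)
  with Lam show ?case by (simp add: shift_subst_Var)
qed simp_all

lemma psubst_lift0: "psubst s (lift 0 t) = psubst (\<lambda>i. s (Suc i)) t"
  by (simp add: lift0_eq_rename psubst_rename)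

lemma lift0_psubst: "lift 0 (psubst s t) = psubst (\<lambda>i. lift 0 (s i)) t"
  by (simp add: lift0_eq_rename rename_psubst)

lemma psubst_psubst: "psubst s (psubst t M) = psubst (\<lambda>i. psubst s (t i)) M"
proof (induction M arbitrary: s t)
  case (Lam M)
  have "(\<lambda>i. psubst (shift_subst s) (shift_subst t i)) = shift_subst (\<lambda>i. psubst s (t i))"
    by (rule ext) (simp add: shift_subst_def scons_def psubst_lift0 lift0_psubst split: nat.split)
  with Lam show ?case by simp
qed simp_all

lemma psubst_Var_id: "psubst Var t = t"
proof (induction t)
  case (Lam t)
  have "shift_subst Var = Var"
    by (rule ext) (simp add: shift_subst_def scons_def split: nat.split)
  with Lam show ?case by simp
qed simp_all

lemma subst0_shift_subst: "subst0 (psubst (shift_subst s) M) N = psubst (scons N s) M"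
proof -
  have "(\<lambda>i. psubst (scons N Var) (shift_subst s i)) = scons N s"
    by (rule ext) (simp add: shift_subst_def scons_def psubst_lift0 psubst_Var_id
        split: nat.split)
  then show ?thesis
    by (simp add: subst0_eq_psubst psubst_psubst)
qed

lemma saturated_beta_expand: "saturated X \<Longrightarrow> subst0 M N \<in> X \<Longrightarrow> App (Lam M) N \<in> X"
  unfolding saturated_def by (metis apps_def foldl_Nil)

lemma saturated_arrow_set:
  assumes "saturated Y"
  shows "saturated (arrow_set X Y)"
  unfolding saturated_def arrow_set_def
proof (intro allI impI CollectI ballI)
  fix M N Ns P
  assume "apps (subst0 M N) Ns \<in> {M. \<forall>N\<in>X. App M N \<in> Y}" and "P \<in> X"
  then have "apps (subst0 M N) (Ns @ [P]) \<in> Y"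
    by (simp add: apps_def)
  then have "apps (App (Lam M) N) (Ns @ [P]) \<in> Y"
    using assms unfolding saturated_def by blast
  then show "App (apps (App (Lam M) N) Ns) P \<in> Y"
    by (simp add: apps_def)
qed

lemma Lam_in_arrow_set:
  assumes "saturated Y" and "\<And>N. N \<in> X \<Longrightarrow> subst0 M N \<in> Y"
  shows "Lam M \<in> arrow_set X Y"
  using assms saturated_beta_expand unfolding arrow_set_def by blast

lemma realizer_list_eq_Inter: "realizer_list I bs = (\<Inter>b\<in>set bs. realizer I b)"
  by (simp add: realizer_list_def)

lemma realizer_list_antimono: "set bs' \<subseteq> set bs \<Longrightarrow> realizer_list I bs \<subseteq> realizer_list I bs'"
  by (auto simp: realizer_list_eq_Inter)

lemma saturated_realizer:
  assumes "\<And>x. saturated (I x)"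
  shows "saturated (realizer I a)"
  by (induction a) (simp_all add: assms saturated_arrow_set)

lemma in_class_nth_less: "in_class C \<alpha> m n \<Longrightarrow> i < m \<Longrightarrow> \<alpha> ! i < n"
  unfolding in_class_def by (metis lessThan_iff nth_mem subsetD)

lemma dmor_realizer_mono:
  assumes "is_interpretation domA codA I"
  shows "dmor C domA codA f x y \<Longrightarrow> realizer I x \<subseteq> realizer I y"
proof (induction rule: dmor.induct)
  case (base f)
  then show ?case using assms by (simp add: is_interpretation_def)
next
  case (arr \<alpha> xs ys fs f x y)
  have "(\<Inter>b\<in>set ys. realizer I b) \<subseteq> realizer I (xs ! i)" if "i < length xs" for i
  proof -
    have "\<alpha> ! i < length ys"
      using arr.hyps(1) that by (rule in_class_nth_less)
    then have "(\<Inter>b\<in>set ys. realizer I b) \<subseteq> realizer I (ys ! (\<alpha> ! i))"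
      by (auto dest: bspec[OF _ nth_mem])
    with arr.IH(1) that show ?thesis by blast
  qed
  then have "(\<Inter>b\<in>set ys. realizer I b) \<subseteq> (\<Inter>b\<in>set xs. realizer I b)"
    by (fastforce simp: in_set_conv_nth)
  with arr.IH(2) show ?case
    unfolding realizer.simps arrow_set_def by blast
qed

lemma smor_realizer_list_mono:
  assumes "is_interpretation domA codA I" and "smor C domA codA \<phi> xs ys"
  shows "realizer_list I xs \<subseteq> realizer_list I ys"
proof -
  have "realizer_list I xs \<subseteq> realizer I (ys ! i)" if "i < length ys" for i
  proof -
    have "fst \<phi> ! i < length xs"
      using assms(2) that unfolding smor_def by (blast intro: in_class_nth_less)
    then have "realizer_list I xs \<subseteq> realizer I (xs ! (fst \<phi> ! i))"
      by (auto simp: realizer_list_eq_Inter)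
    with dmor_realizer_mono[OF assms(1)] assms(2) that show ?thesis
      unfolding smor_def by blast
  qed
  then show ?thesis
    by (fastforce simp: realizer_list_eq_Inter in_set_conv_nth)
qed

definition realizes_ctx :: "('o \<Rightarrow> trm set) \<Rightarrow> (nat \<Rightarrow> trm) \<Rightarrow> 'o ctx \<Rightarrow> bool" where
  "realizes_ctx I s D \<longleftrightarrow> (\<forall>i<length D. s i \<in> realizer_list I (D ! i))"

lemma realizes_ctx_scons:
  "N \<in> realizer_list I bs \<Longrightarrow> realizes_ctx I s D \<Longrightarrow> realizes_ctx I (scons N s) (bs # D)"
  by (auto simp: realizes_ctx_def less_Suc_eq_0_disj)

lemma realizes_ctx_tensor_factor:
  assumes "is_interpretation domA codA I"
    and "ctx_mor C domA codA \<eta> D (ctx_tensor (length D) Gs)"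
    and "G \<in> set Gs" and "length G = length D"
    and "realizes_ctx I s D"
  shows "realizes_ctx I s G"
  unfolding realizes_ctx_def
proof (intro allI impI)
  fix j assume "j < length G"
  then have j: "j < length D" using assms(4) by simp
  have "smor C domA codA (\<eta> ! j) (D ! j) (concat (map (\<lambda>G. G ! j) Gs))"
    using assms(2) j unfolding ctx_mor_def ctx_tensor_def by simp
  then have "realizer_list I (D ! j) \<subseteq> realizer_list I (concat (map (\<lambda>G. G ! j) Gs))"
    by (rule smor_realizer_list_mono[OF assms(1)])
  also have "\<dots> \<subseteq> realizer_list I (G ! j)"
    using assms(3) by (intro realizer_list_antimono) auto
  finally show "s j \<in> realizer_list I (G ! j)"
    using assms(5) j unfolding realizes_ctx_def by blast
qed

theorem typed_sound:
  assumes interp: "is_interpretation domA codA I"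
  shows "typed C domA codA D M a \<Longrightarrow> realizes_ctx I s D \<Longrightarrow> psubst s M \<in> realizer I a"
proof (induction arbitrary: s rule: typed.induct)
  case (var i D a)
  then obtain \<phi> where "smor C domA codA \<phi> (D ! i) [a]" by blast
  from smor_realizer_list_mono[OF interp this] var.prems var.hyps(1) show ?case
    by (auto simp: realizes_ctx_def realizer_list_eq_Inter)
next
  case (abs bs D M a)
  show ?case
    unfolding psubst_Lam realizer.simps
  proof (rule Lam_in_arrow_set)
    show "saturated (realizer I a)"
      using interp by (simp add: is_interpretation_def saturated_realizer)
    fix N assume "N \<in> (\<Inter>b\<in>set bs. realizer I b)"
    then show "subst0 (psubst (shift_subst s) M) N \<in> realizer I a"
      using abs.IH realizes_ctx_scons[OF _ abs.prems]
      by (simp add: subst0_shift_subst realizer_list_eq_Inter)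
  qed
next
  case (app G0 M bs a Gs N D)
  then obtain \<eta> where \<eta>: "ctx_mor C domA codA \<eta> D (ctx_tensor (length D) (G0 # Gs))"
    by blast
  have "psubst s M \<in> realizer I (Arrow bs a)"
    using app.IH(1) realizes_ctx_tensor_factor[OF interp \<eta> _ \<open>length G0 = length D\<close> app.prems]
    by simp
  moreover have "psubst s N \<in> realizer I (bs ! i)" if "i < length bs" for i
    using app.IH(2) realizes_ctx_tensor_factor[OF interp \<eta> _ _ app.prems] that
      \<open>length Gs = length bs\<close> \<open>\<forall>i<length Gs. length (Gs ! i) = length D\<close>
    by simp
  ultimately show ?case
    by (fastforce simp: arrow_set_def in_set_conv_nth)
qed

theorem lemma5:
  fixes domA codA :: "'m \<Rightarrow> 'o" and idm :: "'o \<Rightarrow> 'm" and compA :: "'m \<Rightarrow> 'm \<Rightarrow> 'm"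
    and C :: fclass and I :: "'o \<Rightarrow> trm set"
    and D :: "'o ctx" and M :: trm and a :: "'o dty" and Ns :: "trm list"
  assumes "small_category domA codA idm compA"
    and "is_interpretation domA codA I"
    and "typed C domA codA D M a"
    and "length Ns = length D"
    and "\<forall>i<length D. Ns ! i \<in> realizer_list I (D ! i)"
  shows "psubst (\<lambda>i. if i < length Ns then Ns ! i else Var i) M \<in> realizer I a"
proof -
  have "realizes_ctx I (\<lambda>i. if i < length Ns then Ns ! i else Var i) D"
    using assms(4,5) by (simp add: realizes_ctx_def)
  with typed_sound[OF assms(2,3)] show ?thesis .
qed

end
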